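(* Let $A_0(z)$ be the unique function holomorphic near $z=0$ with $A_0(0)=0$ and $z(1+A_0(z))^3=A_0(z)$, define $A_k(z)$, $k\ge1$, by the recurrence below, and define $A_k[n]$ by $A_k(z)=(-1)^k\sum_{n\ge1}A_k[n]z^n$. Then for every $k=0,1,2,\dots$, the sequence $n\mapsto A_k[n]$ is monotonically increasing.
   Context: With $\delta_z=z\frac{d}{dz}$, for $k\ge0$: $$A_{k+1}=\frac{1+A_0}{2A_0-1}\Bigl(\delta_z^2A_k+\sum_{i+j=k}\bigl(A_i\delta_z^2A_j-\delta_zA_i\,\delta_zA_j\bigr)-3z\!\!\sum_{\substack{i+j=k+1\\ i,j\le k}}\!\!A_iA_j-z\!\!\!\sum_{\substack{j_1+j_2+j_3=k+1\\ j_1,j_2,j_3\le k}}\!\!\!A_{j_1}A_{j_2}A_{j_3}\Bigr),$$ all indices nonnegative. Equivalently, $(A_k)$ is the unique sequence of functions holomorphic in $|z|<4/27$ such that $\sum_kA_k(z)a^{-2k}$ formally solves $a^2(z(1+A)^3-A)=(1+A)\delta_z^2A-(\delta_zA)^2$. *)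

theory Defs
  imports "HOL-Computational_Algebra.Formal_Power_Series"
begin

text \<open>The functions A_k(z), holomorphic in |z| < 4/27, are represented by their
Taylor expansions at 0, i.e. as formal power series with real coefficients.\<close>

definition euler_op :: "real fps \<Rightarrow> real fps" where
  "euler_op f = fps_X * fps_deriv f"

definition A0 :: "real fps" where
  "A0 = (THE A. fps_nth A 0 = 0 \<and> fps_X * (1 + A) ^ 3 = A)"

definition A_step :: "(nat \<Rightarrow> real fps) \<Rightarrow> nat \<Rightarrow> real fps" where
  "A_step Aprev k =
     (1 + A0) / (2 * A0 - 1) *
     ( euler_op (euler_op (Aprev k))
     + (\<Sum>i\<le>k. Aprev i * euler_op (euler_op (Aprev (k - i)))
                - euler_op (Aprev i) * euler_op (Aprev (k - i)))
     - 3 * fps_X * (\<Sum>i\<in>{1..k}. Aprev i * Aprev (k + 1 - i))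
     - fps_X * (\<Sum>(j1, j2, j3) \<in> {(j1, j2, j3). j1 + j2 + j3 = k + 1 \<and> j1 \<le> k \<and> j2 \<le> k \<and> j3 \<le> k}.
                   Aprev j1 * Aprev j2 * Aprev j3))"

fun A_list :: "nat \<Rightarrow> real fps list" where
  "A_list 0 = [A0]"
| "A_list (Suc k) = A_list k @ [A_step (\<lambda>i. A_list k ! i) k]"

definition A :: "nat \<Rightarrow> real fps" where
  "A k = A_list k ! k"

definition Acoeff :: "nat \<Rightarrow> nat \<Rightarrow> real" where
  "Acoeff k n = (-1) ^ k * fps_nth (A k) n"

end

theory Submission
  imports Defs
begin

text \<open>
  Put \<open>c\<^sub>k = (-1)\<^sup>k A\<^sub>k\<close>. A power series has nonnegative nondecreasing coefficients iff
  \<open>(1 - z) f\<close> has nonnegative coefficients, and this property is preserved by sums, by \<open>\<delta>\<^sub>z\<close>,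
  by products with series with nonnegative coefficients, and by the symmetric form
  \<open>B(f, g) = f \<delta>\<^sub>z\<^sup>2g + g \<delta>\<^sub>z\<^sup>2f - 2 \<delta>\<^sub>zf \<delta>\<^sub>zg\<close>: the coefficients of \<open>B(f, g)\<close> are
  \<open>\<Sum>\<^sub>i\<^sub>+\<^sub>j\<^sub>=\<^sub>n f\<^sub>i g\<^sub>j (j - i)\<^sup>2\<close>, and \<open>(1 - z)\<^sup>2 B(f, g) = B((1 - z) f, (1 - z) g) + 2 z f g\<close>
  while \<open>1 / (1 - z)\<close> has nonnegative coefficients.
  In terms of the \<open>c\<^sub>j\<close> the recurrence reads \<open>c\<^sub>k\<^sub>+\<^sub>1 = (1 + A\<^sub>0) / (1 - 2 A\<^sub>0) \<cdot> R\<^sub>k\<close>, where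
  \<open>R\<^sub>k\<close> is built from \<open>c\<^sub>0, \<dots>, c\<^sub>k\<close> by exactly these operations, and \<open>1 / (1 - 2 A\<^sub>0)\<close> has
  nonnegative coefficients. Since \<open>(1 - z) A\<^sub>0 = z (1 + 2 A\<^sub>0 + 3 A\<^sub>0\<^sup>2 + A\<^sub>0\<^sup>3)\<close>, induction on \<open>k\<close>
  shows that every \<open>c\<^sub>k\<close> has nonnegative nondecreasing coefficients.
\<close>

unbundle fps_syntax

definition fps_nonneg :: "'a::linordered_idom fps \<Rightarrow> bool" where
  "fps_nonneg f \<longleftrightarrow> (\<forall>n. 0 \<le> f $ n)"

definition fps_nonneg_incr :: "'a::linordered_idom fps \<Rightarrow> bool" where
  "fps_nonneg_incr f \<longleftrightarrow> fps_nonneg ((1 - fps_X) * f)"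

lemma fps_nonneg_add: "fps_nonneg f \<Longrightarrow> fps_nonneg g \<Longrightarrow> fps_nonneg (f + g)"
  by (simp add: fps_nonneg_def)

lemma fps_nonneg_mult: "fps_nonneg f \<Longrightarrow> fps_nonneg g \<Longrightarrow> fps_nonneg (f * g)"
  by (simp add: fps_nonneg_def fps_mult_nth sum_nonneg)

lemma fps_nonneg_sum: "(\<And>i. i \<in> S \<Longrightarrow> fps_nonneg (f i)) \<Longrightarrow> fps_nonneg (sum f S)"
  by (simp add: fps_nonneg_def fps_sum_nth sum_nonneg)

lemma fps_nonneg_1: "fps_nonneg 1"
  by (simp add: fps_nonneg_def)

lemma fps_nonneg_power: "fps_nonneg f \<Longrightarrow> fps_nonneg (f ^ n)"
  by (induction n) (simp_all add: fps_nonneg_1 fps_nonneg_mult)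

lemma fps_nonneg_X: "fps_nonneg fps_X"
  by (simp add: fps_nonneg_def fps_X_def)

lemma fps_nonneg_numeral: "fps_nonneg (numeral k)"
  by (simp add: fps_nonneg_def fps_numeral_nth)

lemmas fps_nonneg_intros =
  fps_nonneg_add fps_nonneg_mult fps_nonneg_sum fps_nonneg_power
  fps_nonneg_1 fps_nonneg_X fps_nonneg_numeral

lemma fps_nonneg_inverse_one_minus:
  fixes g :: "'a::linordered_field fps"
  assumes "fps_nonneg g" "g $ 0 = 0"
  shows "fps_nonneg (inverse (1 - g))"
proof -
  define h where "h = inverse (1 - g)"
  have "h * (1 - g) = 1"
    unfolding h_def using assms(2) by (intro inverse_mult_eq_1) simp
  then have h_eq: "h = 1 + g * h"
    by (simp add: algebra_simps)
  have "0 \<le> h $ n" for n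
  proof (induction n rule: less_induct)
    case (less n)
    have "0 \<le> g $ i * h $ (n - i)" if "i \<le> n" for i
      using assms less that by (cases i) (auto simp: fps_nonneg_def)
    then have "0 \<le> (g * h) $ n"
      by (auto simp: fps_mult_nth intro!: sum_nonneg)
    then show ?case
      by (subst h_eq) simp
  qed
  then show ?thesis
    by (simp add: fps_nonneg_def h_def)
qed

lemma fps_one_minus_X_mult_nth:
  "((1 - fps_X) * f) $ n = (if n = 0 then f $ 0 else f $ n - f $ (n - 1))"
  for f :: "'a::comm_ring_1 fps"
  by (simp add: left_diff_distrib)

lemma fps_nonneg_incr_iff:
  "fps_nonneg_incr f \<longleftrightarrow> 0 \<le> f $ 0 \<and> (\<forall>n. f $ n \<le> f $ Suc n)"
proof -
  have "(\<forall>n. P n) \<longleftrightarrow> P 0 \<and> (\<forall>n. P (Suc n))" for P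
    by (metis not0_implies_Suc)
  from this[of "\<lambda>n. 0 \<le> ((1 - fps_X) * f) $ n"] show ?thesis
    unfolding fps_nonneg_incr_def fps_nonneg_def by (simp add: fps_one_minus_X_mult_nth)
qed

lemma fps_nonneg_incr_imp_nonneg:
  assumes "fps_nonneg_incr f"
  shows "fps_nonneg f"
proof -
  have "0 \<le> f $ n" for n
  proof (induction n)
    case 0
    then show ?case using assms by (simp add: fps_nonneg_incr_iff)
  next
    case (Suc n)
    then show ?case using assms unfolding fps_nonneg_incr_iff by (meson order.trans)
  qed
  then show ?thesis
    by (simp add: fps_nonneg_def)
qed

lemma fps_nonneg_incr_add:
  "fps_nonneg_incr f \<Longrightarrow> fps_nonneg_incr g \<Longrightarrow> fps_nonneg_incr (f + g)"
  unfolding fps_nonneg_incr_def by (simp add: distrib_left fps_nonneg_add)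

lemma fps_nonneg_incr_mult_right:
  "fps_nonneg_incr f \<Longrightarrow> fps_nonneg g \<Longrightarrow> fps_nonneg_incr (f * g)"
  unfolding fps_nonneg_incr_def by (metis mult.assoc fps_nonneg_mult)

lemma fps_nonneg_incr_mult_left:
  "fps_nonneg g \<Longrightarrow> fps_nonneg_incr f \<Longrightarrow> fps_nonneg_incr (g * f)"
  by (metis fps_nonneg_incr_mult_right mult.commute)

lemma fps_nonneg_incr_sum:
  "(\<And>i. i \<in> S \<Longrightarrow> fps_nonneg_incr (f i)) \<Longrightarrow> fps_nonneg_incr (sum f S)"
  unfolding fps_nonneg_incr_def by (simp add: sum_distrib_left fps_nonneg_sum)

lemma fps_nonneg_incr_double_cancel: "fps_nonneg_incr (2 * f) \<Longrightarrow> fps_nonneg_incr f"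
  unfolding fps_nonneg_incr_def fps_nonneg_def
  by (simp add: numeral_fps_const mult.left_commute[of "1 - fps_X"])

lemma euler_op_nth: "euler_op f $ n = of_nat n * f $ n"
  by (cases n) (simp_all add: euler_op_def)

lemma euler_op_one_minus_X_mult:
  "euler_op ((1 - fps_X) * f) = (1 - fps_X) * euler_op f - fps_X * f"
  by (simp add: euler_op_def algebra_simps)

lemma euler_op_euler_op_one_minus_X_mult:
  "euler_op (euler_op ((1 - fps_X) * f)) =
     (1 - fps_X) * euler_op (euler_op f) - 2 * fps_X * euler_op f - fps_X * f"
  by (simp add: euler_op_def algebra_simps)

lemma euler_op_const_mult: "euler_op (fps_const c * f) = fps_const c * euler_op f"
  by (simp add: euler_op_def algebra_simps)

lemma fps_nonneg_incr_euler_op: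
  assumes "fps_nonneg_incr f"
  shows "fps_nonneg_incr (euler_op f)"
proof -
  have "0 \<le> f $ n" for n
    using fps_nonneg_incr_imp_nonneg[OF assms] by (simp add: fps_nonneg_def)
  with assms show ?thesis
    unfolding fps_nonneg_incr_iff euler_op_nth by (auto intro!: mult_mono)
qed

definition euler_form :: "real fps \<Rightarrow> real fps \<Rightarrow> real fps" where
  "euler_form f g =
     f * euler_op (euler_op g) + euler_op (euler_op f) * g - 2 * (euler_op f * euler_op g)"

lemma euler_form_nth:
  "euler_form f g $ n = (\<Sum>i=0..n. f $ i * g $ (n - i) * (real (n - i) - real i)\<^sup>2)"
proof -
  have "euler_form f g $ n =
      (\<Sum>i=0..n. f $ i * (real (n - i) * (real (n - i) * g $ (n - i))))
    + (\<Sum>i=0..n. real i * (real i * f $ i) * g $ (n - i))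
    - 2 * (\<Sum>i=0..n. real i * f $ i * (real (n - i) * g $ (n - i)))"
    unfolding euler_form_def numeral_fps_const fps_sub_nth fps_add_nth fps_mult_left_const_nth
    by (simp add: fps_mult_nth euler_op_nth)
  also have "\<dots> = (\<Sum>i=0..n. f $ i * g $ (n - i) * (real (n - i) - real i)\<^sup>2)"
    by (simp add: sum_distrib_left sum.distrib[symmetric] sum_subtractf[symmetric]
        power2_diff algebra_simps power2_eq_square)
  finally show ?thesis .
qed

lemma fps_nonneg_euler_form: "fps_nonneg f \<Longrightarrow> fps_nonneg g \<Longrightarrow> fps_nonneg (euler_form f g)"
  by (auto simp: fps_nonneg_def euler_form_nth intro!: sum_nonneg)

lemma euler_form_one_minus_X_mult:
  "euler_form ((1 - fps_X) * f) ((1 - fps_X) * g) =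
     (1 - fps_X)\<^sup>2 * euler_form f g - 2 * fps_X * f * g"
  unfolding euler_form_def euler_op_euler_op_one_minus_X_mult
  unfolding euler_op_one_minus_X_mult
  by (simp add: algebra_simps power2_eq_square)

lemma fps_nonneg_incr_euler_form:
  assumes "fps_nonneg_incr f" "fps_nonneg_incr g"
  shows "fps_nonneg_incr (euler_form f g)"
proof -
  let ?q = "1 - fps_X :: real fps"
  have "inverse ?q * ?q = 1"
    by (intro inverse_mult_eq_1) simp
  then have "?q * euler_form f g = inverse ?q * (?q\<^sup>2 * euler_form f g)"
    by (simp only: power2_eq_square mult.assoc[symmetric] mult_1)
  also have "\<dots> = inverse ?q * (euler_form (?q * f) (?q * g) + 2 * fps_X * f * g)"
    by (simp add: euler_form_one_minus_X_mult)
  finally have eq: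
    "?q * euler_form f g = inverse ?q * (euler_form (?q * f) (?q * g) + 2 * fps_X * f * g)" .
  have "fps_nonneg (euler_form (?q * f) (?q * g))"
    using assms unfolding fps_nonneg_incr_def by (rule fps_nonneg_euler_form)
  moreover have "fps_nonneg (2 * fps_X * f * g)"
    using assms by (intro fps_nonneg_intros fps_nonneg_incr_imp_nonneg)
  moreover have "fps_nonneg (inverse ?q)"
    by (rule fps_nonneg_inverse_one_minus) (simp_all add: fps_nonneg_X)
  ultimately show ?thesis
    unfolding fps_nonneg_incr_def eq by (blast intro: fps_nonneg_add fps_nonneg_mult)
qed

lemma cubic_fixpoint_unique:
  fixes a b :: "'a::idom fps"
  assumes "fps_X * (1 + a) ^ 3 = a" "fps_X * (1 + b) ^ 3 = b"
  shows "a = b"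
proof -
  define Q where "Q = (1 + a)\<^sup>2 + (1 + a) * (1 + b) + (1 + b)\<^sup>2"
  have "(a - b) * (1 - fps_X * Q) = a - b - fps_X * ((1 + a) ^ 3 - (1 + b) ^ 3)"
    unfolding Q_def by algebra
  also have "\<dots> = 0"
    using assms by (simp add: right_diff_distrib)
  finally have "(a - b) * (1 - fps_X * Q) = 0" .
  moreover have "1 - fps_X * Q \<noteq> 0"
    using fps_nonzeroI[of "1 - fps_X * Q" 0] by simp
  ultimately show ?thesis
    by simp
qed

lemma cubic_fixpoint_exists: "\<exists>a::'a::field fps. a $ 0 = 0 \<and> fps_X * (1 + a) ^ 3 = a"
proof -
  define g :: "'a fps" where "g = fps_X * inverse ((1 + fps_X) ^ 3)"
  define u where "u = fps_inv g"
  have u0: "u $ 0 = 0"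
    by (simp add: u_def fps_inv_def)
  have "g oo u = fps_X"
    unfolding u_def by (intro fps_inv_right) (simp_all add: g_def fps_nth_power_0)
  moreover have "g oo u = u * inverse ((1 + u) ^ 3)"
  proof -
    have "g oo u = (fps_X oo u) * (inverse ((1 + fps_X) ^ 3) oo u)"
      unfolding g_def using u0 by (rule fps_compose_mult_distrib)
    also have "inverse ((1 + fps_X) ^ 3) oo u = inverse ((1 + fps_X) ^ 3 oo u)"
      using u0 by (intro fps_inverse_compose) auto
    also have "(1 + fps_X) ^ 3 oo u = (1 + u) ^ 3"
      using u0 by (simp add: fps_compose_power[symmetric] fps_compose_add_distrib)
    finally show ?thesis
      using u0 by simp
  qed
  moreover have "inverse ((1 + u) ^ 3) * (1 + u) ^ 3 = 1"
    using u0 by (intro inverse_mult_eq_1) auto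
  ultimately have "fps_X * (1 + u) ^ 3 = u"
    by (metis mult.assoc mult.right_neutral)
  with u0 show ?thesis
    by blast
qed

lemma A0_fixpoint: "fps_X * (1 + A0) ^ 3 = A0"
proof -
  have "\<exists>!a::real fps. a $ 0 = 0 \<and> fps_X * (1 + a) ^ 3 = a"
    using cubic_fixpoint_exists cubic_fixpoint_unique by blast
  from theI'[OF this] show ?thesis
    unfolding A0_def by blast
qed

lemma A0_nth_0: "A0 $ 0 = 0"
  by (subst A0_fixpoint[symmetric]) simp

lemma fps_power_nth_nonneg_upto:
  fixes f :: "'a::linordered_idom fps"
  assumes "\<And>i. i \<le> n \<Longrightarrow> 0 \<le> f $ i" "j \<le> n"
  shows "0 \<le> (f ^ m) $ j"
  using assms(2)
proof (induction m arbitrary: j)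
  case 0
  then show ?case by simp
next
  case (Suc m)
  then show ?case
    using assms(1) by (auto simp: fps_mult_nth intro!: sum_nonneg)
qed

lemma fps_nonneg_A0: "fps_nonneg A0"
proof -
  have "\<forall>i\<le>n. 0 \<le> A0 $ i" for n
  proof (induction n)
    case 0
    then show ?case by (simp add: A0_nth_0)
  next
    case (Suc n)
    have "0 \<le> ((1 + A0) ^ 3) $ n"
      using Suc by (intro fps_power_nth_nonneg_upto[of n]) auto
    also have "((1 + A0) ^ 3) $ n = A0 $ Suc n"
      by (subst (2) A0_fixpoint[symmetric]) simp
    finally show ?case
      using Suc le_Suc_eq by auto
  qed
  then show ?thesis
    by (auto simp: fps_nonneg_def)
qed

lemma fps_nonneg_incr_A0: "fps_nonneg_incr A0"
proof -
  have "(1 - fps_X) * A0 = fps_X * (1 + A0) ^ 3 - fps_X * A0"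
    by (simp add: left_diff_distrib A0_fixpoint)
  also have "\<dots> = fps_X * (1 + 2 * A0 + 3 * A0\<^sup>2 + A0 ^ 3)"
    by (simp add: algebra_simps power2_eq_square power3_eq_cube)
  finally have eq: "(1 - fps_X) * A0 = fps_X * (1 + 2 * A0 + 3 * A0\<^sup>2 + A0 ^ 3)" .
  show ?thesis
    unfolding fps_nonneg_incr_def eq by (intro fps_nonneg_intros fps_nonneg_A0)
qed

lemma fps_nonneg_A_step_factor: "fps_nonneg ((1 + A0) * inverse (1 - 2 * A0))"
  using A0_nth_0 by (intro fps_nonneg_intros fps_nonneg_A0 fps_nonneg_inverse_one_minus) simp_all

lemma length_A_list: "length (A_list k) = Suc k"
  by (induction k) auto

lemma A_list_nth: "i \<le> k \<Longrightarrow> A_list k ! i = A i"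
  by (induction k) (auto simp: A_def nth_append length_A_list le_Suc_eq)

lemma A_step_cong: "(\<And>i. i \<le> k \<Longrightarrow> f i = g i) \<Longrightarrow> A_step f k = A_step g k"
  unfolding A_step_def
  by (auto intro!: sum.cong arg_cong2[where f="(+)"] arg_cong2[where f="(-)"]
      arg_cong2[where f="(*)"] simp: split_beta)

lemma A_Suc: "A (Suc k) = A_step A k"
proof -
  have "A (Suc k) = A_step (\<lambda>i. A_list k ! i) k"
    by (simp add: A_def nth_append length_A_list)
  also have "\<dots> = A_step A k"
    by (rule A_step_cong) (simp add: A_list_nth)
  finally show ?thesis .
qed

definition step_bracket :: "(nat \<Rightarrow> real fps) \<Rightarrow> nat \<Rightarrow> real fps" where
  "step_bracket f k =
     euler_op (euler_op (f k))
     + (\<Sum>i\<le>k. f i * euler_op (euler_op (f (k - i))) - euler_op (f i) * euler_op (f (k - i)))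
     - 3 * fps_X * (\<Sum>i\<in>{1..k}. f i * f (k + 1 - i))
     - fps_X * (\<Sum>(j1, j2, j3) \<in> {(j1, j2, j3). j1 + j2 + j3 = k + 1 \<and> j1 \<le> k \<and> j2 \<le> k \<and> j3 \<le> k}.
                   f j1 * f j2 * f j3)"

lemma A_step_eq: "A_step f k = (1 + A0) / (2 * A0 - 1) * step_bracket f k"
  unfolding A_step_def step_bracket_def ..

text \<open>The bracket for the signed sequence \<open>g i = (-1)\<^sup>i f i\<close>: the quadratic and cubic sums
  have total index \<open>k + 1\<close>, so their signs flip relative to \<open>(-1)\<^sup>k\<close>.\<close>

definition signed_step_rhs :: "(nat \<Rightarrow> real fps) \<Rightarrow> nat \<Rightarrow> real fps" where
  "signed_step_rhs g k =
     euler_op (euler_op (g k))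
     + (\<Sum>i\<le>k. g i * euler_op (euler_op (g (k - i))) - euler_op (g i) * euler_op (g (k - i)))
     + 3 * fps_X * (\<Sum>i\<in>{1..k}. g i * g (k + 1 - i))
     + fps_X * (\<Sum>(j1, j2, j3) \<in> {(j1, j2, j3). j1 + j2 + j3 = k + 1 \<and> j1 \<le> k \<and> j2 \<le> k \<and> j3 \<le> k}.
                   g j1 * g j2 * g j3)"

lemma sign_twist_mult:
  fixes f g :: "real fps"
  defines "s m \<equiv> fps_const ((-1) ^ m)"
  shows "s i * f * (s j * g) = s (i + j) * (f * g)"
  by (simp add: s_def power_add algebra_simps)

lemma sign_twist_euler_pair:
  fixes f g :: "real fps"
  defines "s m \<equiv> fps_const ((-1) ^ m)"
  shows "s i * f * euler_op (euler_op (s j * g)) - euler_op (s i * f) * euler_op (s j * g) =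
    s (i + j) * (f * euler_op (euler_op g) - euler_op f * euler_op g)"
  unfolding s_def euler_op_const_mult by (simp add: power_add algebra_simps)

lemma step_bracket_signed:
  "fps_const ((-1) ^ k) * step_bracket f k = signed_step_rhs (\<lambda>i. fps_const ((-1) ^ i) * f i) k"
proof -
  define s :: "nat \<Rightarrow> real fps" where "s i = fps_const ((-1) ^ i)" for i
  define g where "g i = s i * f i" for i
  define T where "T = {(j1, j2, j3). j1 + j2 + j3 = k + 1 \<and> j1 \<le> k \<and> j2 \<le> k \<and> j3 \<le> k}"
  have "s k * euler_op (euler_op (f k)) = euler_op (euler_op (g k))"
    by (simp add: g_def s_def euler_op_const_mult)
  moreover have "s k * (\<Sum>i\<le>k. f i * euler_op (euler_op (f (k - i))) - euler_op (f i) * euler_op (f (k - i)))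
      = (\<Sum>i\<le>k. g i * euler_op (euler_op (g (k - i))) - euler_op (g i) * euler_op (g (k - i)))"
    unfolding sum_distrib_left g_def s_def sign_twist_euler_pair by (intro sum.cong) simp_all
  moreover have "- (s k * (\<Sum>i\<in>{1..k}. f i * f (k + 1 - i))) =
      (\<Sum>i\<in>{1..k}. g i * g (k + 1 - i))"
    unfolding sum_distrib_left sum_negf[symmetric] g_def s_def sign_twist_mult
    by (intro sum.cong) (simp_all add: fps_const_neg[symmetric] del: fps_const_neg)
  moreover have "- (s k * (\<Sum>(j1, j2, j3) \<in> T. f j1 * f j2 * f j3)) =
      (\<Sum>(j1, j2, j3) \<in> T. g j1 * g j2 * g j3)"
    unfolding sum_distrib_left sum_negf[symmetric] g_def s_def
    by (intro sum.cong)
      (auto simp: T_def sign_twist_mult fps_const_neg[symmetric] simp del: fps_const_neg)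
  moreover have "s * (a + b - c * d - e * h) = s * a + s * b + c * - (s * d) + e * - (s * h)"
    for s a b c d e h :: "real fps"
    by (simp add: algebra_simps)
  ultimately have "s k * step_bracket f k = signed_step_rhs g k"
    unfolding step_bracket_def signed_step_rhs_def T_def[symmetric] by (simp only:)
  then show ?thesis
    by (simp add: s_def g_def[abs_def])
qed

lemma A_step_signed:
  "fps_const ((-1) ^ Suc k) * A_step f k =
     (1 + A0) * inverse (1 - 2 * A0) * signed_step_rhs (\<lambda>i. fps_const ((-1) ^ i) * f i) k"
proof -
  have "inverse (2 * A0 - 1) = - inverse (1 - 2 * A0)"
    by (metis fps_inverse_minus minus_diff_eq)
  with A0_nth_0 have factor: "(1 + A0) / (2 * A0 - 1) = - ((1 + A0) * inverse (1 - 2 * A0))"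
    by (simp add: fps_divide_unit)
  have sign: "fps_const ((-1) ^ Suc k) = - fps_const ((-1) ^ k :: real)"
    by simp
  have "- c * (- P * B) = P * (c * B)" for c P B :: "real fps"
    by (simp add: algebra_simps)
  then show ?thesis
    unfolding A_step_eq factor sign step_bracket_signed[symmetric] .
qed

lemma sum_euler_form_convolution:
  fixes g :: "nat \<Rightarrow> real fps"
  shows "(\<Sum>i\<le>k. euler_form (g i) (g (k - i))) =
     2 * (\<Sum>i\<le>k. g i * euler_op (euler_op (g (k - i))) - euler_op (g i) * euler_op (g (k - i)))"
proof -
  have "(\<Sum>i\<le>k. euler_op (euler_op (g i)) * g (k - i)) =
      (\<Sum>i\<le>k. g i * euler_op (euler_op (g (k - i))))"
  proof -
    have "(\<Sum>i\<le>k. euler_op (euler_op (g i)) * g (k - i)) =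
        (\<Sum>i\<le>k. euler_op (euler_op (g (k - i))) * g (k - (k - i)))"
      using sum.atLeastAtMost_rev[of "\<lambda>i. euler_op (euler_op (g i)) * g (k - i)" 0 k]
      by (simp add: atLeast0AtMost)
    also have "\<dots> = (\<Sum>i\<le>k. g i * euler_op (euler_op (g (k - i))))"
      by (intro sum.cong) (auto simp: mult.commute)
    finally show ?thesis .
  qed
  then show ?thesis
    by (simp add: euler_form_def sum.distrib sum_subtractf sum_distrib_left algebra_simps)
qed

lemma fps_nonneg_incr_signed_step_rhs:
  assumes "\<And>i. i \<le> k \<Longrightarrow> fps_nonneg_incr (g i)"
  shows "fps_nonneg_incr (signed_step_rhs g k)"
proof -
  have nonneg: "fps_nonneg (g i)" if "i \<le> k" for i
    using assms[OF that] by (rule fps_nonneg_incr_imp_nonneg)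
  have "fps_nonneg_incr (euler_op (euler_op (g k)))"
    using assms by (simp add: fps_nonneg_incr_euler_op)
  moreover have "fps_nonneg_incr
      (\<Sum>i\<le>k. g i * euler_op (euler_op (g (k - i))) - euler_op (g i) * euler_op (g (k - i)))"
    by (rule fps_nonneg_incr_double_cancel)
      (auto simp: sum_euler_form_convolution[symmetric]
        intro!: fps_nonneg_incr_sum fps_nonneg_incr_euler_form assms)
  moreover have "fps_nonneg_incr (3 * fps_X * (\<Sum>i\<in>{1..k}. g i * g (k + 1 - i)))"
  proof -
    have "fps_nonneg_incr (g i * g (k + 1 - i))" if "i \<in> {1..k}" for i
      using that by (intro fps_nonneg_incr_mult_right assms nonneg) auto
    moreover have "fps_nonneg (3 * fps_X)"
      by (intro fps_nonneg_intros)
    ultimately show ?thesis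
      by (blast intro: fps_nonneg_incr_mult_left fps_nonneg_incr_sum)
  qed
  moreover have "fps_nonneg_incr (fps_X * (\<Sum>(j1, j2, j3) \<in> {(j1, j2, j3). j1 + j2 + j3 = k + 1 \<and> j1 \<le> k \<and> j2 \<le> k \<and> j3 \<le> k}.
                   g j1 * g j2 * g j3))"
    by (intro fps_nonneg_incr_mult_left[OF fps_nonneg_X] fps_nonneg_incr_sum)
      (auto intro!: fps_nonneg_incr_mult_right assms nonneg)
  ultimately show ?thesis
    unfolding signed_step_rhs_def by (intro fps_nonneg_incr_add)
qed

lemma fps_nonneg_incr_signed_A: "fps_nonneg_incr (fps_const ((-1) ^ k) * A k)"
proof (induction k rule: less_induct)
  case (less k)
  show ?case
  proof (cases k)
    case 0
    then show ?thesis
      by (simp add: A_def fps_nonneg_incr_A0)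
  next
    case (Suc m)
    then have "fps_const ((-1) ^ k) * A k =
        (1 + A0) * inverse (1 - 2 * A0) * signed_step_rhs (\<lambda>i. fps_const ((-1) ^ i) * A i) m"
      by (simp only: A_Suc A_step_signed)
    moreover have "fps_nonneg_incr (fps_const ((-1) ^ i) * A i)" if "i \<le> m" for i
      using Suc that by (intro less) simp
    ultimately show ?thesis
      by (simp add: fps_nonneg_incr_mult_left fps_nonneg_A_step_factor
          fps_nonneg_incr_signed_step_rhs)
  qed
qed

theorem proposition4:
  shows "\<forall>k n. 1 \<le> n \<longrightarrow> Acoeff k n \<le> Acoeff k (Suc n)"
proof (intro allI impI)
  fix k n :: nat
  have "Acoeff k m = (fps_const ((-1) ^ k) * A k) $ m" for m
    by (simp add: Acoeff_def)
  with fps_nonneg_incr_signed_A[of k] show "Acoeff k n \<le> Acoeff k (Suc n)"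
    by (simp add: fps_nonneg_incr_iff)
qed

end
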